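(* Let $n\ge1$ and let $v=\mathrm{id}_{S^n}: S^n\to S^n$. Then the fundamental action on $[S^n\times S^n, S^n]^v$ is trivial.
   Context: $[S^n\times S^n,S^n]^v$ denotes the set of homotopy classes, relative the diagonal $D=\Delta(S^n)\subset S^n\times S^n$, of maps $f: S^n\times S^n\to S^n$ with $f\circ\Delta = v$. The fundamental action of $\pi_{n+1}(S^n)\cong[\Sigma_\ast D,S^n]^v$ (pointed self-homotopies of $v$) on this set is defined by extending such a self-homotopy to a homotopy starting at a given map $f$, using the homotopy extension property of $D\rightarrowtail S^n\times S^n$, and taking the end map. *)

theory Defs
  imports "HOL-Analysis.Analysis"
begin

definition diag :: "'a set \<Rightarrow> ('a \<times> 'a) set" where
  "diag S = (\<lambda>x. (x, x)) ` S"

definition diag_id_map :: "'a::topological_space set \<Rightarrow> ('a \<times> 'a \<Rightarrow> 'a) \<Rightarrow> bool" where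
  "diag_id_map S f \<longleftrightarrow> continuous_on (S \<times> S) f \<and> f ` (S \<times> S) \<subseteq> S \<and> (\<forall>x\<in>S. f (x, x) = x)"

definition homotopic_rel_diag :: "'a::real_normed_vector set \<Rightarrow> ('a \<times> 'a \<Rightarrow> 'a) \<Rightarrow> ('a \<times> 'a \<Rightarrow> 'a) \<Rightarrow> bool" where
  "homotopic_rel_diag S f g \<longleftrightarrow>
     homotopic_with_canon (\<lambda>k. \<forall>x\<in>S. k (x, x) = x) (S \<times> S) S f g"

definition pointed_self_homotopy_diag ::
    "'a::real_normed_vector set \<Rightarrow> 'a \<Rightarrow> (real \<times> ('a \<times> 'a) \<Rightarrow> 'a) \<Rightarrow> bool" where
  "pointed_self_homotopy_diag S b h \<longleftrightarrow>
     continuous_on ({0..1} \<times> diag S) h \<and> h ` ({0..1} \<times> diag S) \<subseteq> S \<and>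
     (\<forall>x\<in>S. h (0, (x, x)) = x \<and> h (1, (x, x)) = x) \<and>
     (\<forall>t\<in>{0..1}. h (t, (b, b)) = b)"

text \<open>g is an end map of an extension of the self-homotopy h to a homotopy starting at f,
  i.e. g is a representative of the result of the fundamental action of [h] on [f].\<close>
definition fundamental_action_result ::
    "'a::real_normed_vector set \<Rightarrow> ('a \<times> 'a \<Rightarrow> 'a) \<Rightarrow> (real \<times> ('a \<times> 'a) \<Rightarrow> 'a) \<Rightarrow> ('a \<times> 'a \<Rightarrow> 'a) \<Rightarrow> bool" where
  "fundamental_action_result S f h g \<longleftrightarrow>
     (\<exists>G. continuous_on ({0..1} \<times> (S \<times> S)) G \<and> G ` ({0..1} \<times> (S \<times> S)) \<subseteq> S \<and>
          (\<forall>p\<in>S \<times> S. G (0, p) = f p) \<and>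
          (\<forall>t\<in>{0..1}. \<forall>d\<in>diag S. G (t, d) = h (t, d)) \<and>
          g = (\<lambda>p. G (1, p)))"

end

theory Submission
  imports Defs
begin

text \<open>Since \<open>f \<circ> \<Delta> = id\<close>, the map \<open>p \<mapsto> (f p, f p)\<close> retracts \<open>S \<times> S\<close> onto the diagonal, so
  every self-homotopy \<open>h\<^sub>t\<close> of \<open>id\<close> on the diagonal extends to the homotopy
  \<open>(t, p) \<mapsto> h\<^sub>t (f p, f p)\<close>, which starts and ends at \<open>f\<close>. The end map of any other extension of
  \<open>h\<close> starting at \<open>f\<close> is homotopic to \<open>f\<close> relative to the diagonal, because the fundamental
  action is well defined: the homotopy extension property of the diagonal (Borsuk, the sphere being
  an ANR) lets one compare two extensions of the same homotopy. Neither the dimension nor the base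
  point plays a role.\<close>

lemma homotopic_with_canon_relI:
  fixes H :: "real \<times> 'a::topological_space \<Rightarrow> 'b::topological_space"
  assumes "A \<subseteq> X"
    and "continuous_on ({0..1} \<times> X) H" "H ` ({0..1} \<times> X) \<subseteq> Y"
    and "\<And>x. x \<in> X \<Longrightarrow> H (0, x) = f x" "\<And>x. x \<in> X \<Longrightarrow> H (1, x) = g x"
    and "\<And>t a. t \<in> {0..1} \<Longrightarrow> a \<in> A \<Longrightarrow> H (t, a) = c a"
  shows "homotopic_with_canon (\<lambda>k. \<forall>a\<in>A. k a = c a) X Y f g"
proof -
  have property_local: "(\<forall>a\<in>A. h a = c a) \<longleftrightarrow> (\<forall>a\<in>A. k a = c a)"
    if "\<And>x. x \<in> topspace (top_of_set X) \<Longrightarrow> h x = k x" for h k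
    using that assms(1) by (metis subsetD topspace_euclidean_subtopology)
  have "continuous_map (prod_topology (top_of_set {0..1}) (top_of_set X)) (top_of_set Y) H"
    using assms(2,3) by (simp add: image_subset_iff_funcset)
  then show ?thesis
    by (subst homotopic_with[OF property_local]) (use assms(4-) in auto)
qed

text \<open>At \<open>s = 0\<close> this is \<open>G\<close> run backwards followed by \<open>G'\<close>; raising \<open>s\<close> clamps the time parameter
  from below, and at \<open>s = 1\<close> only the end maps \<open>G (1, -)\<close> and \<open>G' (1, -)\<close> remain.\<close>
definition reverse_join_squeeze ::
    "(real \<times> 'a \<Rightarrow> 'b) \<Rightarrow> (real \<times> 'a \<Rightarrow> 'b) \<Rightarrow> real \<times> real \<times> 'a \<Rightarrow> 'b" where
  "reverse_join_squeeze G G' =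
     (\<lambda>(s, u, x). if u \<le> 1/2 then G (max (1 - 2*u) s, x) else G' (max (2*u - 1) s, x))"

lemma
  fixes G G' :: "real \<times> 'a::topological_space \<Rightarrow> 'b::topological_space"
    and X :: "'a set"
  defines "W \<equiv> {(s, u, x). s \<in> {0..1} \<and> u \<in> {0..1} \<and> x \<in> X \<and> (u = 1/2 \<longrightarrow> G' (s, x) = G (s, x))}"
  assumes G: "continuous_on ({0..1} \<times> X) G" "G ` ({0..1} \<times> X) \<subseteq> Y"
    and G': "continuous_on ({0..1} \<times> X) G'" "G' ` ({0..1} \<times> X) \<subseteq> Y"
  shows continuous_on_reverse_join_squeeze: "continuous_on W (reverse_join_squeeze G G')"
    and reverse_join_squeeze_image: "reverse_join_squeeze G G' ` W \<subseteq> Y"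
proof -
  have "continuous_on {y \<in> W. fst (snd y) \<le> 1/2}
      (\<lambda>y. G (max (1 - 2 * fst (snd y)) (fst y), snd (snd y)))"
    by (rule continuous_on_compose2[OF G(1), where f="\<lambda>y. (max (1 - 2 * fst (snd y)) (fst y), snd (snd y))"])
       (auto simp: W_def intro!: continuous_intros)
  moreover have "continuous_on {y \<in> W. 1/2 \<le> fst (snd y)}
      (\<lambda>y. G' (max (2 * fst (snd y) - 1) (fst y), snd (snd y)))"
    by (rule continuous_on_compose2[OF G'(1), where f="\<lambda>y. (max (2 * fst (snd y) - 1) (fst y), snd (snd y))"])
       (auto simp: W_def intro!: continuous_intros)
  ultimately show "continuous_on W (reverse_join_squeeze G G')"
    unfolding reverse_join_squeeze_def split_def
    by (intro continuous_on_cases_le[where h="\<lambda>y. fst (snd y)" and a="1/2"])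
       (auto simp: W_def intro!: continuous_intros)
  show "reverse_join_squeeze G G' ` W \<subseteq> Y"
    using G(2) G'(2) by (force simp: W_def reverse_join_squeeze_def)
qed

text \<open>The squeeze deforms \<open>G\<close> reversed followed by \<open>G'\<close> into the end maps on
  \<open>{0,1} \<times> X \<union> [0,1] \<times> A\<close>; Borsuk's homotopy extension turns the end of that deformation into a
  homotopy on all of \<open>[0,1] \<times> X\<close>.\<close>
lemma homotopic_rel_end_maps_of_extensions:
  fixes G G' :: "real \<times> 'a::euclidean_space \<Rightarrow> 'b::euclidean_space"
  assumes Y: "ANR Y" and A: "closedin (top_of_set X) A"
    and G: "continuous_on ({0..1} \<times> X) G" "G ` ({0..1} \<times> X) \<subseteq> Y"
    and G': "continuous_on ({0..1} \<times> X) G'" "G' ` ({0..1} \<times> X) \<subseteq> Y"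
    and start: "\<And>x. x \<in> X \<Longrightarrow> G' (0, x) = G (0, x)"
    and rel: "\<And>t a. t \<in> {0..1} \<Longrightarrow> a \<in> A \<Longrightarrow> G' (t, a) = G (t, a)"
  shows "homotopic_with_canon (\<lambda>k. \<forall>a\<in>A. k a = G (1, a)) X Y (\<lambda>x. G (1, x)) (\<lambda>x. G' (1, x))"
proof -
  define \<Phi> where "\<Phi> = reverse_join_squeeze G G'"
  define W where "W = {(s, u :: real, x). s \<in> {0..1} \<and> u \<in> {0..1} \<and> x \<in> X \<and> (u = 1/2 \<longrightarrow> G' (s, x) = G (s, x))}"
  define B where "B = {0 :: real, 1} \<times> X \<union> {0..1} \<times> A"
  have AX: "A \<subseteq> X"
    using A by (rule closedin_imp_subset)
  have \<Phi>: "continuous_on W \<Phi>" "\<Phi> ` W \<subseteq> Y"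
    unfolding \<Phi>_def W_def
    by (rule continuous_on_reverse_join_squeeze[OF G G'] reverse_join_squeeze_image[OF G G'])+
  have W0: "Pair 0 ` ({0..1} \<times> X) \<subseteq> W"
    using start by (auto simp: W_def)
  have W1: "{0..1} \<times> B \<subseteq> W"
    using AX rel by (auto simp: W_def B_def)
  have "closedin (top_of_set ({0..1} \<times> X)) B"
    unfolding B_def by (intro closedin_Un closedin_Times A) (auto simp: closed_subset)
  moreover have "continuous_on ({0..1} \<times> X) (\<lambda>y. \<Phi> (0, y))"
    by (rule continuous_on_compose2[OF \<Phi>(1)]) (use W0 in \<open>auto intro!: continuous_intros\<close>)
  moreover have "(\<lambda>y. \<Phi> (0, y)) \<in> {0..1} \<times> X \<rightarrow> Y"
    using W0 \<Phi>(2) by blast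
  moreover have "homotopic_with_canon (\<lambda>k. True) B Y (\<lambda>y. \<Phi> (0, y)) (\<lambda>y. \<Phi> (1, y))"
  proof (rule homotopic_with_mono[OF homotopic_with_canon_relI[of "{}"]])
    show "continuous_on ({0..1} \<times> B) \<Phi>"
      using \<Phi>(1) W1 by (rule continuous_on_subset)
    show "\<Phi> ` ({0..1} \<times> B) \<subseteq> Y"
      using \<Phi>(2) W1 by blast
  qed auto
  ultimately obtain E where E: "continuous_on ({0..1} \<times> X) E" "E ` ({0..1} \<times> X) \<subseteq> Y"
    and EB: "\<And>y. y \<in> B \<Longrightarrow> E y = \<Phi> (1, y)"
    by (rule Borsuk_homotopy_extension_homotopic[OF _ disjI2[OF Y]]) blast
  have \<Phi>1: "\<Phi> (1, u, x) = (if u \<le> 1/2 then G (1, x) else G' (1, x))" if "u \<in> {0..1}" for u x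
    using that by (simp add: \<Phi>_def reverse_join_squeeze_def)
  show ?thesis
  proof (rule homotopic_with_canon_relI[OF AX E])
    show "E (0, x) = G (1, x)" "E (1, x) = G' (1, x)" if "x \<in> X" for x
      using that EB[of "(0, x)"] EB[of "(1, x)"] \<Phi>1 by (simp_all add: B_def)
    show "E (t, a) = G (1, a)" if "t \<in> {0..1}" "a \<in> A" for t a
      using that EB[of "(t, a)"] \<Phi>1[of t a] rel[of 1 a] by (simp add: B_def)
  qed
qed

lemma closedin_diag:
  fixes S :: "'a::t2_space set"
  shows "closedin (top_of_set (S \<times> S)) (diag S)"
proof -
  have "diag S = (S \<times> S) \<inter> {y. \<exists>x. y = (x, x)}"
    by (auto simp: diag_def)
  also have "closedin (top_of_set (S \<times> S)) \<dots>"
    by (rule closedin_closed_Int[OF closed_diagonal])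
  finally show ?thesis .
qed

lemma fundamental_action_of_id_trivial:
  fixes S :: "'a::euclidean_space set"
  assumes S: "ANR S"
    and f: "diag_id_map S f"
    and h: "pointed_self_homotopy_diag S b h"
    and g: "fundamental_action_result S f h g"
  shows "homotopic_rel_diag S g f"
proof -
  have fc: "continuous_on (S \<times> S) f" and fS: "f ` (S \<times> S) \<subseteq> S" and fd: "\<And>x. x \<in> S \<Longrightarrow> f (x, x) = x"
    using f by (auto simp: diag_id_map_def)
  have hc: "continuous_on ({0..1} \<times> diag S) h" and hS: "h ` ({0..1} \<times> diag S) \<subseteq> S"
    and h0: "\<And>x. x \<in> S \<Longrightarrow> h (0, x, x) = x" and h1: "\<And>x. x \<in> S \<Longrightarrow> h (1, x, x) = x"
    using h by (auto simp: pointed_self_homotopy_diag_def)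
  obtain G where G: "continuous_on ({0..1} \<times> (S \<times> S)) G" "G ` ({0..1} \<times> (S \<times> S)) \<subseteq> S"
    and G0: "\<And>p. p \<in> S \<times> S \<Longrightarrow> G (0, p) = f p"
    and Gd: "\<And>t d. t \<in> {0..1} \<Longrightarrow> d \<in> diag S \<Longrightarrow> G (t, d) = h (t, d)"
    and gG: "g = (\<lambda>p. G (1, p))"
    using g unfolding fundamental_action_result_def by blast
  define H where "H = (\<lambda>(t, p). h (t, (f p, f p)))"
  have fdiag: "(f p, f p) \<in> diag S" if "p \<in> S \<times> S" for p
    using that fS by (auto simp: diag_def)
  have H_end: "H (1, p) = f p" if "p \<in> S \<times> S" for p
    using that fS h1 by (force simp: H_def)
  have "continuous_on ({0..1} \<times> (S \<times> S)) H"
    unfolding H_def split_def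
    by (rule continuous_on_compose2[OF hc, where f="\<lambda>y. (fst y, f (snd y), f (snd y))"])
       (auto intro!: continuous_intros continuous_on_compose2[OF fc] simp: fdiag)
  moreover have "H ` ({0..1} \<times> (S \<times> S)) \<subseteq> S"
    using hS fdiag by (force simp: H_def)
  moreover have "H (0, p) = G (0, p)" if "p \<in> S \<times> S" for p
    using that fS h0 G0 by (force simp: H_def)
  moreover have "H (t, d) = G (t, d)" if "t \<in> {0..1}" "d \<in> diag S" for t d
    using that fd Gd by (auto simp: H_def diag_def)
  ultimately have "homotopic_with_canon (\<lambda>k. \<forall>d\<in>diag S. k d = G (1, d)) (S \<times> S) S g (\<lambda>p. H (1, p))"
    unfolding gG by (rule homotopic_rel_end_maps_of_extensions[OF S closedin_diag G])
  then have "homotopic_with_canon (\<lambda>k. \<forall>x\<in>S. k (x, x) = x) (S \<times> S) S g (\<lambda>p. H (1, p))"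
    by (rule homotopic_with_mono) (auto simp: diag_def Gd h1)
  then show ?thesis
    unfolding homotopic_rel_diag_def
    by (rule homotopic_with_eq) (auto simp: H_end)
qed

theorem corollary4p5:
  fixes S :: "'a::euclidean_space set"
    and b :: 'a
    and f g :: "'a \<times> 'a \<Rightarrow> 'a"
    and h :: "real \<times> ('a \<times> 'a) \<Rightarrow> 'a"
  assumes "DIM('a) \<ge> 2"
    and "S = sphere 0 1"
    and "b \<in> S"
    and "diag_id_map S f"
    and "pointed_self_homotopy_diag S b h"
    and "fundamental_action_result S f h g"
  shows "homotopic_rel_diag S g f"
  using fundamental_action_of_id_trivial[OF _ assms(4-6)] assms(2) ANR_sphere by blast

end
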